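(* Let $n\ge2$, $\tau_1,\dots,\tau_n\in\mathbb{C}$, $\vartheta\notin-\mathbb{N}$ (and $\vartheta\neq0$). Then, as identities of formal power series in the variables $z_{j,k}$ ($1\le k<j\le n$): for $1\le r_1<r_2\le n-1$, $$\partial_{z_{r_2,r_1}}(\mathcal{X}_A)=\sum_{s=1}^{r_1}\tau_sP_{[s,r_1]}\,\mathcal{X}_A[s,r_2],$$ and for $r\in\{1,\dots,n-1\}$, $$\partial_{z_{n,r}}(\mathcal{X}_A)=\frac{\tau_n}{\vartheta}\sum_{s=1}^{r}\tau_sP_{[s,r]}\,\mathcal{X}_A[s,n].$$
   Context: $(c)_i=c(c+1)\cdots(c+i-1)$. $\Gamma_A=\bigoplus_{1\le j<i\le n}\mathbb{N}\epsilon_{i,j}$; for $\beta\in\Gamma_A$: $\beta_{\underline 1}=0$, $\beta_{\underline i}=\sum_{r=1}^{i-1}\beta_{i,r}$, $\beta_{\overline n}=0$, $\beta_{\overline j}=\sum_{s=j+1}^n\beta_{s,j}$, $\beta!=\prod\beta_{j,k}!$, $z^\beta=\prod z_{j,k}^{\beta_{j,k}}$. $\mathcal{X}_A=\mathcal{X}_A(\tau_1,\dots,\tau_n;\vartheta)\{z_{j,k}\}=\sum_{\beta\in\Gamma_A}\frac{\left[\prod_{s=1}^{n-1}(\tau_s-\beta_{\underline s})_{\beta_{\overline s}}\right](\tau_n)_{\beta_{\underline n}}}{\beta!\,(\vartheta)_{\beta_{\underline n}}}z^\beta$. For $1\le i<j\le n-1$, $\mathcal{X}_A[i,j]$ is $\mathcal{X}_A$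 with $\tau_i$ replaced by $\tau_i+1$ and $\tau_j$ by $\tau_j-1$; for $k\le n-1$, $\mathcal{X}_A[k,n]$ is $\mathcal{X}_A$ with $\tau_k\to\tau_k+1$, $\tau_n\to\tau_n+1$, $\vartheta\to\vartheta+1$ (and $\mathcal{X}_A[k,k]$, $\mathcal X_A[k,n]$ for the evident index ranges are defined by these rules). Path polynomials: for positive integers $k_1<k_2$, a path from $k_1$ to $k_2$ is a sequence $k_1=m_0<m_1<\cdots<m_r=k_2$, and $P_{[k_1,k_2]}=\sum_{\text{paths}}(-1)^rz_{m_1,m_0}z_{m_2,m_1}\cdots z_{m_r,m_{r-1}}$; $P_{[k,k]}=1$. *)

theory Defs
  imports Complex_Main
begin

text \<open>Formal power series in the variables z_{j,k} (1 <= k < j <= n) are represented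
by their coefficient functions: a multi-index beta is a function
(nat * nat) => nat (beta (j,k) is the exponent of z_{j,k}), and a series is a
map from multi-indices to complex coefficients.\<close>

type_synonym mindex = "nat \<times> nat \<Rightarrow> nat"
type_synonym fps_A = "mindex \<Rightarrow> complex"

definition idxA :: "nat \<Rightarrow> (nat \<times> nat) set" where
  "idxA n = {(j, k). 1 \<le> k \<and> k < j \<and> j \<le> n}"

definition GammaA :: "nat \<Rightarrow> mindex set" where
  "GammaA n = {\<beta>. \<forall>p. \<beta> p \<noteq> 0 \<longrightarrow> p \<in> idxA n}"

definition beta_under :: "mindex \<Rightarrow> nat \<Rightarrow> nat" where
  "beta_under \<beta> i = (\<Sum>r = 1..<i. \<beta> (i, r))"

definition beta_over :: "nat \<Rightarrow> mindex \<Rightarrow> nat \<Rightarrow> nat" where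
  "beta_over n \<beta> j = (\<Sum>s = j+1..n. \<beta> (s, j))"

definition beta_fact :: "nat \<Rightarrow> mindex \<Rightarrow> nat" where
  "beta_fact n \<beta> = (\<Prod>p\<in>idxA n. fact (\<beta> p))"

definition XA :: "nat \<Rightarrow> (nat \<Rightarrow> complex) \<Rightarrow> complex \<Rightarrow> fps_A" where
  "XA n \<tau> \<theta> \<beta> =
     (if \<beta> \<in> GammaA n then
        ((\<Prod>s = 1..n-1. pochhammer (\<tau> s - of_nat (beta_under \<beta> s)) (beta_over n \<beta> s))
          * pochhammer (\<tau> n) (beta_under \<beta> n))
        / (of_nat (beta_fact n \<beta>) * pochhammer \<theta> (beta_under \<beta> n))
      else 0)"

definition XA_shift :: "nat \<Rightarrow> (nat \<Rightarrow> complex) \<Rightarrow> complex \<Rightarrow> nat \<Rightarrow> nat \<Rightarrow> fps_A" where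
  "XA_shift n \<tau> \<theta> i j = XA n (\<tau>(i := \<tau> i + 1, j := \<tau> j - 1)) \<theta>"

definition XA_shift_n :: "nat \<Rightarrow> (nat \<Rightarrow> complex) \<Rightarrow> complex \<Rightarrow> nat \<Rightarrow> fps_A" where
  "XA_shift_n n \<tau> \<theta> k = XA n (\<tau>(k := \<tau> k + 1, n := \<tau> n + 1)) (\<theta> + 1)"

definition fps_deriv_A :: "nat \<times> nat \<Rightarrow> fps_A \<Rightarrow> fps_A" where
  "fps_deriv_A p F \<beta> = of_nat (\<beta> p + 1) * F (\<beta>(p := \<beta> p + 1))"

definition fps_mult_A :: "fps_A \<Rightarrow> fps_A \<Rightarrow> fps_A" where
  "fps_mult_A F G \<beta> = (\<Sum>\<gamma>\<in>{\<gamma>. \<forall>p. \<gamma> p \<le> \<beta> p}. F \<gamma> * G (\<lambda>p. \<beta> p - \<gamma> p))"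

definition fps_scale_A :: "complex \<Rightarrow> fps_A \<Rightarrow> fps_A" where
  "fps_scale_A c F \<beta> = c * F \<beta>"

definition fps_add_A :: "fps_A \<Rightarrow> fps_A \<Rightarrow> fps_A" where
  "fps_add_A F G \<beta> = F \<beta> + G \<beta>"

definition fps_sum_A :: "(nat \<Rightarrow> fps_A) \<Rightarrow> nat set \<Rightarrow> fps_A" where
  "fps_sum_A F S \<beta> = (\<Sum>s\<in>S. F s \<beta>)"

definition paths :: "nat \<Rightarrow> nat \<Rightarrow> nat list set" where
  "paths k1 k2 = {ms. ms \<noteq> [] \<and> hd ms = k1 \<and> last ms = k2 \<and> sorted_wrt (<) ms}"

text \<open>Exponent of the monomial z_{m_1,m_0} z_{m_2,m_1} ... z_{m_r,m_{r-1}}.\<close>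
definition path_exp :: "nat list \<Rightarrow> mindex" where
  "path_exp ms = (\<lambda>(j, k). length (filter (\<lambda>e. e = (k, j)) (zip ms (tl ms))))"

definition path_poly :: "nat \<Rightarrow> nat \<Rightarrow> fps_A" where
  "path_poly k1 k2 \<beta> = (\<Sum>ms\<in>{ms \<in> paths k1 k2. path_exp ms = \<beta>}. (-1) ^ (length ms - 1))"

end

theory Submission
  imports Defs
begin

(*
  Write U_j and V_j for the row and column sums beta_under beta j and beta_over n beta j of a
  multi-index.  Comparing coefficients, the derivative d_{t,r} X_A along z_{t,r} equals
  (tau_r - U_r) Y_r, where Y_s = X_A[s,t] for t < n and Y_s = (tau_n / theta) X_A[s,n] for t = n:
  the extra exponent raises V_r, and (a)_{m+1} = a (a+1)_m turns this into the factor
  tau_r - U_r and the shift tau_r + 1, while raising U_t amounts to shifting tau_t (or tau_n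
  and theta).  In the same way z_{s,r} d_{t,r} X_A has coefficient beta_{s,r} Y_s.  Summing
  over r < s and using U_s = sum_r beta_{s,r} gives the triangular system
      tau_s Y_s = d_{t,s} X_A + sum_{r<s} z_{s,r} d_{t,r} X_A.
  Its matrix 1 + (z_{s,r}) is unipotent, and the path polynomials are the entries of its
  inverse: removing the last step of a path gives P_{[s,r1]} = - sum_r z_{r1,r} P_{[s,r]}.
*)

section \<open>Paths and path polynomials\<close>

definition fps_mult_var_A :: "nat \<times> nat \<Rightarrow> fps_A \<Rightarrow> fps_A" where
  "fps_mult_var_A p F \<beta> = (if 1 \<le> \<beta> p then F (\<beta>(p := \<beta> p - 1)) else 0)"

lemma paths_mem_bounds:
  assumes "ms \<in> paths s r" and "x \<in> set ms"
  shows "s \<le> x \<and> x \<le> r"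
proof
  obtain ys where "ms = s # ys" "sorted_wrt (<) (s # ys)"
    using assms(1) by (cases ms) (auto simp: paths_def)
  then show "s \<le> x" using assms(2) by auto
  obtain zs where "ms = zs @ [r]" "sorted_wrt (<) (zs @ [r])"
    using assms(1) unfolding paths_def by (metis (mono_tags) append_butlast_last_id mem_Collect_eq)
  then show "x \<le> r" using assms(2) by (auto simp: sorted_wrt_append)
qed

lemma paths_refl: "paths s s = {[s]}"
proof -
  have "ms = [s]" if ms: "ms \<in> paths s s" for ms
  proof -
    obtain ys where ys: "ms = s # ys" and "\<forall>y\<in>set ys. s < y"
      using ms by (cases ms) (auto simp: paths_def)
    moreover have "\<forall>y\<in>set ys. y \<le> s"
      using paths_mem_bounds[OF ms] ys by auto
    ultimately show ?thesis by (cases ys) auto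
  qed
  then show ?thesis by (auto simp: paths_def)
qed

lemma finite_paths: "finite (paths s r)"
proof (rule finite_subset)
  show "paths s r \<subseteq> {xs. set xs \<subseteq> {s..r} \<and> length xs \<le> card {s..r}}"
  proof clarify
    fix ms assume ms: "ms \<in> paths s r"
    then have "set ms \<subseteq> {s..r}" and "distinct ms"
      using paths_mem_bounds by (fastforce, simp add: paths_def strict_sorted_iff)
    then show "set ms \<subseteq> {s..r} \<and> length ms \<le> card {s..r}"
      by (metis card_mono distinct_card finite_atLeastAtMost)
  qed
qed (rule finite_lists_length_le, simp)

lemma paths_snoc:
  assumes "s < r1"
  shows "paths s r1 = (\<Union>r\<in>{s..<r1}. (\<lambda>ms. ms @ [r1]) ` paths s r)"
proof (intro equalityI subsetI)
  fix ms assume ms: "ms \<in> paths s r1"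
  define ns where "ns = butlast ms"
  have ms_eq: "ms = ns @ [r1]" and "hd ms = s" and sorted: "sorted_wrt (<) (ns @ [r1])"
    using ms by (auto simp: paths_def ns_def)
  then have "ns \<noteq> []" using assms by auto
  then have "ns \<in> paths s (last ns)" "last ns \<in> {s..<r1}"
    using \<open>hd ms = s\<close> sorted paths_mem_bounds[OF ms, of "last ns"]
    by (auto simp: paths_def ms_eq sorted_wrt_append)
  then show "ms \<in> (\<Union>r\<in>{s..<r1}. (\<lambda>ms. ms @ [r1]) ` paths s r)"
    using ms_eq by blast
next
  fix ms assume "ms \<in> (\<Union>r\<in>{s..<r1}. (\<lambda>ms. ms @ [r1]) ` paths s r)"
  then obtain r ns where "r \<in> {s..<r1}" "ns \<in> paths s r" "ms = ns @ [r1]" by blast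
  then show "ms \<in> paths s r1"
    using paths_mem_bounds by (fastforce simp: paths_def sorted_wrt_append)
qed

lemma sum_paths_snoc:
  assumes "s < r1"
  shows "(\<Sum>ms\<in>paths s r1. f ms) = (\<Sum>r = s..<r1. \<Sum>ms\<in>paths s r. f (ms @ [r1]))"
proof -
  have "(\<Sum>ms\<in>paths s r1. f ms) = (\<Sum>r = s..<r1. \<Sum>ms\<in>(\<lambda>ms. ms @ [r1]) ` paths s r. f ms)"
    unfolding paths_snoc[OF assms]
  proof (rule sum.UNION_disjoint)
    show "\<forall>r\<in>{s..<r1}. \<forall>r'\<in>{s..<r1}. r \<noteq> r' \<longrightarrow>
        (\<lambda>ms. ms @ [r1]) ` paths s r \<inter> (\<lambda>ms. ms @ [r1]) ` paths s r' = {}"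
      by (auto simp: paths_def)
  qed (simp_all add: finite_paths)
  also have "\<dots> = (\<Sum>r = s..<r1. \<Sum>ms\<in>paths s r. f (ms @ [r1]))"
    by (simp add: sum.reindex inj_on_def)
  finally show ?thesis .
qed

lemma zip_tl_snoc: "xs \<noteq> [] \<Longrightarrow> zip (xs @ [y]) (tl xs @ [y]) = zip xs (tl xs) @ [(last xs, y)]"
  by (induction xs rule: induct_list012) auto

lemma zip_tl_memD: "(a, b) \<in> set (zip xs (tl xs)) \<Longrightarrow> a \<in> set xs \<and> b \<in> set xs"
  by (cases xs) (auto dest: set_zip_leftD set_zip_rightD)

lemma path_exp_beyond_last:
  assumes "ms \<in> paths s r" and "r < j"
  shows "path_exp ms (j, k) = 0"
proof -
  have "j \<notin> set ms" using paths_mem_bounds[OF assms(1)] assms(2) by fastforce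
  then have "(k, j) \<notin> set (zip ms (tl ms))"
    by (auto dest: zip_tl_memD)
  then show ?thesis by (auto simp: path_exp_def filter_empty_conv)
qed

lemma path_exp_snoc:
  assumes ms: "ms \<in> paths s r" and "r < r1"
  shows "path_exp (ms @ [r1]) = (path_exp ms)((r1, r) := 1)"
proof -
  have "ms \<noteq> []" "last ms = r" using ms by (auto simp: paths_def)
  then show ?thesis
    using path_exp_beyond_last[OF assms]
    by (auto simp: path_exp_def zip_tl_snoc fun_eq_iff)
qed

lemma path_exp_snoc_eq_iff:
  assumes "ms \<in> paths s r" and "r < r1"
  shows "path_exp (ms @ [r1]) = \<beta> \<longleftrightarrow>
    1 \<le> \<beta> (r1, r) \<and> path_exp ms = \<beta>((r1, r) := \<beta> (r1, r) - 1)"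
  unfolding path_exp_snoc[OF assms]
  using path_exp_beyond_last[OF assms, of r] by (auto simp: fun_eq_iff)

lemma path_poly_eq_sum:
  "path_poly s r \<beta> = (\<Sum>ms\<in>paths s r. if path_exp ms = \<beta> then (-1) ^ (length ms - 1) else 0)"
  unfolding path_poly_def by (rule sum.inter_filter[OF finite_paths])

lemma path_poly_refl: "path_poly s s \<beta> = (if \<beta> = (\<lambda>_. 0) then 1 else 0)"
proof -
  have "path_exp [s] = (\<lambda>_. 0)" by (auto simp: path_exp_def fun_eq_iff)
  then show ?thesis by (auto simp: path_poly_eq_sum paths_refl)
qed

lemma path_poly_snoc:
  assumes "s < r1"
  shows "path_poly s r1 \<beta> = - (\<Sum>r = s..<r1. fps_mult_var_A (r1, r) (path_poly s r) \<beta>)"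
proof -
  have "path_poly s r1 \<beta> =
      (\<Sum>r = s..<r1. \<Sum>ms\<in>paths s r. if path_exp (ms @ [r1]) = \<beta> then (-1) ^ length ms else 0)"
    by (simp add: path_poly_eq_sum sum_paths_snoc[OF assms] cong: if_cong)
  also have "\<dots> = (\<Sum>r = s..<r1. - fps_mult_var_A (r1, r) (path_poly s r) \<beta>)"
  proof (rule sum.cong[OF refl])
    fix r assume "r \<in> {s..<r1}"
    then have "r < r1" by simp
    have "(if path_exp (ms @ [r1]) = \<beta> then (-1) ^ length ms else 0) =
        - (if 1 \<le> \<beta> (r1, r) \<and> path_exp ms = \<beta>((r1, r) := \<beta> (r1, r) - 1)
           then (-1) ^ (length ms - 1) else 0 :: complex)" if ms: "ms \<in> paths s r" for ms
    proof -
      have "length ms \<noteq> 0" using ms by (simp add: paths_def)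
      then have "(-1 :: complex) ^ length ms = - ((-1) ^ (length ms - 1))"
        by (cases "length ms") simp_all
      then show ?thesis by (simp add: path_exp_snoc_eq_iff[OF ms \<open>r < r1\<close>])
    qed
    then show "(\<Sum>ms\<in>paths s r. if path_exp (ms @ [r1]) = \<beta> then (-1) ^ length ms else 0) =
        - fps_mult_var_A (r1, r) (path_poly s r) \<beta>"
      by (simp add: fps_mult_var_A_def path_poly_eq_sum sum_negf)
  qed
  finally show ?thesis by (simp add: sum_negf)
qed

lemma sorted_wrt_zip_tl:
  assumes "sorted_wrt R xs" and "(a, b) \<in> set (zip xs (tl xs))"
  shows "R a b"
  using assms by (auto simp: in_set_zip nth_tl sorted_wrt_iff_nth_less)

lemma path_exp_in_GammaA:
  assumes ms: "ms \<in> paths s r" and "1 \<le> s" and "r \<le> n"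
  shows "path_exp ms \<in> GammaA n"
  unfolding GammaA_def
proof (intro CollectI allI impI)
  fix p assume "path_exp ms p \<noteq> 0"
  then obtain j k where p: "p = (j, k)" and jk: "(k, j) \<in> set (zip ms (tl ms))"
    by (cases p) (auto simp: path_exp_def filter_empty_conv)
  have "k < j" using ms jk by (auto simp: paths_def intro: sorted_wrt_zip_tl)
  moreover have "s \<le> k" "j \<le> r"
    using paths_mem_bounds[OF ms] zip_tl_memD[OF jk] by auto
  ultimately show "p \<in> idxA n" using p assms by (auto simp: idxA_def)
qed

section \<open>Cauchy products and inversion by path polynomials\<close>

lemma finite_idxA: "finite (idxA n)"
  by (rule finite_subset[of _ "{1..n} \<times> {1..n}"]) (auto simp: idxA_def)

lemma GammaA_outside: "\<beta> \<in> GammaA n \<Longrightarrow> p \<notin> idxA n \<Longrightarrow> \<beta> p = 0"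
  unfolding GammaA_def by blast

lemma GammaA_update_iff: "p \<in> idxA n \<Longrightarrow> \<beta>(p := v) \<in> GammaA n \<longleftrightarrow> \<beta> \<in> GammaA n"
  by (auto simp: GammaA_def)

lemma GammaA_decrement: "\<beta> \<in> GammaA n \<Longrightarrow> \<beta>(p := \<beta> p - 1) \<in> GammaA n"
  by (auto simp: GammaA_def)

lemma finite_bounded_GammaA:
  assumes "\<beta> \<in> GammaA n"
  shows "finite {\<gamma>. \<forall>p. \<gamma> p \<le> \<beta> p}"
proof (rule finite_subset)
  let ?M = "\<Sum>p\<in>idxA n. \<beta> p"
  show "{\<gamma>. \<forall>p. \<gamma> p \<le> \<beta> p} \<subseteq> {\<gamma>. \<forall>p. (p \<in> idxA n \<longrightarrow> \<gamma> p \<in> {..?M}) \<and> (p \<notin> idxA n \<longrightarrow> \<gamma> p = 0)}"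
  proof clarify
    fix \<gamma> p assume le: "\<forall>p. \<gamma> p \<le> \<beta> p"
    have "\<beta> p \<le> ?M" if "p \<in> idxA n" by (rule member_le_sum[OF that _ finite_idxA]) simp
    moreover have "\<beta> p = 0" if "p \<notin> idxA n" using assms that by (rule GammaA_outside)
    ultimately show "(p \<in> idxA n \<longrightarrow> \<gamma> p \<in> {..?M}) \<and> (p \<notin> idxA n \<longrightarrow> \<gamma> p = 0)"
      using le[rule_format, of p] by auto
  qed
  show "finite {\<gamma>. \<forall>p. (p \<in> idxA n \<longrightarrow> \<gamma> p \<in> {..?M}) \<and> (p \<notin> idxA n \<longrightarrow> \<gamma> p = 0)}"
    by (rule finite_set_of_finite_funs) (simp_all add: finite_idxA)
qed

lemma sum_triangle_swap:
  fixes f :: "nat \<Rightarrow> nat \<Rightarrow> 'a :: comm_monoid_add"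
  shows "(\<Sum>r = 1..<m. \<Sum>s = 1..r. f r s) = (\<Sum>s = 1..<m. \<Sum>r = s..<m. f r s)"
  by (induction m)
    (auto simp: sum.distrib atLeastLessThanSuc atLeastLessThanSuc_atLeastAtMost[symmetric] ac_simps)

lemma fps_mult_A_mult_var_left:
  assumes "\<beta> \<in> GammaA n"
  shows "fps_mult_A (fps_mult_var_A p F) G \<beta> = fps_mult_var_A p (fps_mult_A F G) \<beta>"
proof (cases "\<beta> p = 0")
  case True
  have "fps_mult_var_A p F \<gamma> = 0" if "\<forall>q. \<gamma> q \<le> \<beta> q" for \<gamma>
    using that[rule_format, of p] True by (simp add: fps_mult_var_A_def)
  then have "fps_mult_A (fps_mult_var_A p F) G \<beta> = 0"
    unfolding fps_mult_A_def by (intro sum.neutral) simp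
  with True show ?thesis by (simp add: fps_mult_var_A_def)
next
  case False
  define \<beta>' where "\<beta>' = \<beta>(p := \<beta> p - 1)"
  define T where "T = {\<gamma> \<in> {\<gamma>. \<forall>q. \<gamma> q \<le> \<beta> q}. 1 \<le> \<gamma> p}"
  define g where "g \<gamma> = F (\<gamma>(p := \<gamma> p - 1)) * G (\<lambda>q. \<beta> q - \<gamma> q)" for \<gamma>
  have bij: "bij_betw (\<lambda>\<delta>. \<delta>(p := \<delta> p + 1)) {\<delta>. \<forall>q. \<delta> q \<le> \<beta>' q} T"
    by (rule bij_betw_byWitness[where f' = "\<lambda>\<gamma>. \<gamma>(p := \<gamma> p - 1)"])
      (use False in \<open>auto simp: T_def \<beta>'_def fun_eq_iff le_diff_conv2 dest: spec[of _ p]\<close>)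
  have "fps_mult_var_A p (fps_mult_A F G) \<beta> = (\<Sum>\<delta> | \<forall>q. \<delta> q \<le> \<beta>' q. F \<delta> * G (\<lambda>q. \<beta>' q - \<delta> q))"
    using False by (simp add: fps_mult_var_A_def fps_mult_A_def \<beta>'_def)
  also have "\<dots> = (\<Sum>\<delta> | \<forall>q. \<delta> q \<le> \<beta>' q. g (\<delta>(p := \<delta> p + 1)))"
  proof (rule sum.cong[OF refl])
    fix \<delta>
    have "(\<lambda>q. \<beta> q - (\<delta>(p := \<delta> p + 1)) q) = (\<lambda>q. \<beta>' q - \<delta> q)"
      by (auto simp: \<beta>'_def)
    then show "F \<delta> * G (\<lambda>q. \<beta>' q - \<delta> q) = g (\<delta>(p := \<delta> p + 1))"
      by (simp add: g_def)
  qed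
  also have "\<dots> = sum g T"
    by (rule sum.reindex_bij_betw[OF bij])
  also have "\<dots> = fps_mult_A (fps_mult_var_A p F) G \<beta>"
    unfolding T_def sum.inter_filter[OF finite_bounded_GammaA[OF assms]]
    by (auto simp: fps_mult_A_def fps_mult_var_A_def g_def intro: sum.cong)
  finally show ?thesis ..
qed

lemma fps_mult_A_sum_left:
  "fps_mult_A (\<lambda>\<gamma>. \<Sum>r\<in>R. F r \<gamma>) G \<beta> = (\<Sum>r\<in>R. fps_mult_A (F r) G \<beta>)"
  unfolding fps_mult_A_def by (simp add: sum_distrib_right) (rule sum.swap)

lemma fps_mult_A_uminus_left: "fps_mult_A (\<lambda>\<gamma>. - F \<gamma>) G \<beta> = - fps_mult_A F G \<beta>"
  unfolding fps_mult_A_def by (simp add: sum_negf)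

lemma fps_mult_A_scale_right: "fps_mult_A F (fps_scale_A c G) = fps_scale_A c (fps_mult_A F G)"
  unfolding fps_mult_A_def fps_scale_A_def by (simp add: sum_distrib_left mult_ac)

lemma fps_mult_A_path_poly_refl:
  assumes "\<beta> \<in> GammaA n"
  shows "fps_mult_A (path_poly s s) G \<beta> = G \<beta>"
proof -
  have "fps_mult_A (path_poly s s) G \<beta> = (\<Sum>\<gamma> | \<forall>q. \<gamma> q \<le> \<beta> q. if \<gamma> = (\<lambda>_. 0) then G \<beta> else 0)"
    unfolding fps_mult_A_def path_poly_refl by (rule sum.cong) auto
  also have "\<dots> = G \<beta>"
    using finite_bounded_GammaA[OF assms] by simp
  finally show ?thesis .
qed

lemma fps_mult_A_path_poly_off_GammaA:
  assumes "1 \<le> s" and "r \<le> n" and "\<beta> \<notin> GammaA n"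
    and G: "\<And>\<gamma>. \<gamma> \<notin> GammaA n \<Longrightarrow> G \<gamma> = 0"
  shows "fps_mult_A (path_poly s r) G \<beta> = 0"
  unfolding fps_mult_A_def
proof (intro sum.neutral ballI)
  fix \<gamma> assume "\<gamma> \<in> {\<gamma>. \<forall>p. \<gamma> p \<le> \<beta> p}"
  show "path_poly s r \<gamma> * G (\<lambda>p. \<beta> p - \<gamma> p) = 0"
  proof (cases "path_poly s r \<gamma> = 0")
    case False
    then have "{ms \<in> paths s r. path_exp ms = \<gamma>} \<noteq> {}"
      unfolding path_poly_def by (metis sum.empty)
    then obtain ms where "ms \<in> paths s r" "path_exp ms = \<gamma>" by blast
    then have "\<gamma> \<in> GammaA n" using path_exp_in_GammaA assms by blast
    moreover obtain q where "\<beta> q \<noteq> 0" "q \<notin> idxA n"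
      using assms(3) unfolding GammaA_def by blast
    ultimately have "(\<lambda>p. \<beta> p - \<gamma> p) \<notin> GammaA n"
      using GammaA_outside[of \<gamma> n q] GammaA_outside[of "\<lambda>p. \<beta> p - \<gamma> p" n q] by auto
    then show ?thesis by (simp add: G)
  qed simp
qed

lemma path_poly_inversion:
  fixes D V :: "nat \<Rightarrow> fps_A"
  assumes triangular: "\<And>s \<beta>. 1 \<le> s \<Longrightarrow> s < t \<Longrightarrow> \<beta> \<in> GammaA n \<Longrightarrow>
      V s \<beta> = D s \<beta> + (\<Sum>r = 1..<s. fps_mult_var_A (s, r) (D r) \<beta>)"
  shows "1 \<le> r1 \<Longrightarrow> r1 < t \<Longrightarrow> \<beta> \<in> GammaA n \<Longrightarrow>
      D r1 \<beta> = (\<Sum>s = 1..r1. fps_mult_A (path_poly s r1) (V s) \<beta>)"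
proof (induction r1 arbitrary: \<beta> rule: less_induct)
  case (less r1)
  let ?M = "\<lambda>r s. fps_mult_A (fps_mult_var_A (r1, r) (path_poly s r)) (V s) \<beta>"
  have "(\<Sum>r = 1..<r1. fps_mult_var_A (r1, r) (D r) \<beta>) = (\<Sum>r = 1..<r1. \<Sum>s = 1..r. ?M r s)"
  proof (rule sum.cong[OF refl])
    fix r assume "r \<in> {1..<r1}"
    then have "fps_mult_var_A (r1, r) (D r) \<beta> =
        (\<Sum>s = 1..r. fps_mult_var_A (r1, r) (fps_mult_A (path_poly s r) (V s)) \<beta>)"
      using less GammaA_decrement by (simp add: fps_mult_var_A_def)
    then show "fps_mult_var_A (r1, r) (D r) \<beta> = (\<Sum>s = 1..r. ?M r s)"
      by (simp add: fps_mult_A_mult_var_left[OF less.prems(3)])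
  qed
  also have "\<dots> = (\<Sum>s = 1..<r1. \<Sum>r = s..<r1. ?M r s)"
    by (rule sum_triangle_swap)
  also have "\<dots> = (\<Sum>s = 1..<r1. - fps_mult_A (path_poly s r1) (V s) \<beta>)"
  proof (rule sum.cong[OF refl])
    fix s assume "s \<in> {1..<r1}"
    then have "(\<lambda>\<gamma>. \<Sum>r = s..<r1. fps_mult_var_A (r1, r) (path_poly s r) \<gamma>) =
        (\<lambda>\<gamma>. - path_poly s r1 \<gamma>)"
      by (simp add: path_poly_snoc)
    then show "(\<Sum>r = s..<r1. ?M r s) = - fps_mult_A (path_poly s r1) (V s) \<beta>"
      by (metis (no_types) fps_mult_A_sum_left fps_mult_A_uminus_left)
  qed
  finally have "D r1 \<beta> = V r1 \<beta> + (\<Sum>s = 1..<r1. fps_mult_A (path_poly s r1) (V s) \<beta>)"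
    using triangular[OF less.prems] by (simp add: sum_negf)
  moreover have "{1..r1} = insert r1 {1..<r1}" using less.prems by auto
  ultimately show ?case
    by (simp add: fps_mult_A_path_poly_refl[OF less.prems(3)])
qed

section \<open>Coefficients of X_A and the contiguity relations\<close>

lemma beta_under_increment:
  assumes "(a, b) \<in> idxA n"
  shows "beta_under (\<beta>((a, b) := \<beta> (a, b) + 1)) = (beta_under \<beta>)(a := beta_under \<beta> a + 1)"
proof
  fix i
  have "beta_under (\<beta>((a, b) := \<beta> (a, b) + 1)) i =
      (\<Sum>r = 1..<i. \<beta> (i, r) + (if (i, r) = (a, b) then 1 else 0))"
    unfolding beta_under_def by (rule sum.cong) auto
  then show "beta_under (\<beta>((a, b) := \<beta> (a, b) + 1)) i =
      ((beta_under \<beta>)(a := beta_under \<beta> a + 1)) i"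
    using assms by (auto simp: sum.distrib beta_under_def idxA_def)
qed

lemma beta_over_increment:
  assumes "(a, b) \<in> idxA n"
  shows "beta_over n (\<beta>((a, b) := \<beta> (a, b) + 1)) = (beta_over n \<beta>)(b := beta_over n \<beta> b + 1)"
proof
  fix j
  have "beta_over n (\<beta>((a, b) := \<beta> (a, b) + 1)) j =
      (\<Sum>s = j+1..n. \<beta> (s, j) + (if (s, j) = (a, b) then 1 else 0))"
    unfolding beta_over_def by (rule sum.cong) auto
  then show "beta_over n (\<beta>((a, b) := \<beta> (a, b) + 1)) j =
      ((beta_over n \<beta>)(b := beta_over n \<beta> b + 1)) j"
    using assms by (auto simp: sum.distrib beta_over_def idxA_def)
qed

lemma beta_fact_increment:
  assumes "p \<in> idxA n"
  shows "beta_fact n (\<beta>(p := \<beta> p + 1)) = beta_fact n \<beta> * (\<beta> p + 1)"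
proof -
  have "(\<Prod>q \<in> idxA n - {p}. fact ((\<beta>(p := \<beta> p + 1)) q)) =
      (\<Prod>q \<in> idxA n - {p}. fact (\<beta> q))"
    by (rule prod.cong) auto
  then show ?thesis
    unfolding beta_fact_def prod.remove[OF finite_idxA assms] by (simp add: algebra_simps)
qed

(* The row sums U and column sums V of beta become free parameters, so that a change of beta
   shows up as a change of parameters; for j < n, tau_j only enters through tau_j - U_j. *)
definition XA_weight ::
    "nat \<Rightarrow> (nat \<Rightarrow> complex) \<Rightarrow> complex \<Rightarrow> (nat \<Rightarrow> nat) \<Rightarrow> (nat \<Rightarrow> nat) \<Rightarrow> complex" where
  "XA_weight n \<tau> \<theta> U V =
     (\<Prod>j = 1..n-1. pochhammer (\<tau> j - of_nat (U j)) (V j))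
       * pochhammer (\<tau> n) (U n) / pochhammer \<theta> (U n)"

lemma XA_eq_weight:
  "\<beta> \<in> GammaA n \<Longrightarrow>
    XA n \<tau> \<theta> \<beta> = XA_weight n \<tau> \<theta> (beta_under \<beta>) (beta_over n \<beta>) / of_nat (beta_fact n \<beta>)"
  by (simp add: XA_def XA_weight_def mult.commute)

lemma XA_weight_cong:
  assumes "\<And>j. j \<in> {1..n-1} \<Longrightarrow> \<tau> j - of_nat (U j) = \<tau>' j - of_nat (U' j)"
    and "\<tau> n = \<tau>' n" and "U n = U' n"
  shows "XA_weight n \<tau> \<theta> U V = XA_weight n \<tau>' \<theta> U' V"
proof -
  have "(\<Prod>j = 1..n-1. pochhammer (\<tau> j - of_nat (U j)) (V j)) =
      (\<Prod>j = 1..n-1. pochhammer (\<tau>' j - of_nat (U' j)) (V j))"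
    using assms(1) by (intro prod.cong) auto
  then show ?thesis using assms(2,3) by (simp add: XA_weight_def)
qed

lemma XA_weight_top_row:
  "XA_weight n \<tau> \<theta> (U(n := U n + 1)) V = \<tau> n / \<theta> * XA_weight n (\<tau>(n := \<tau> n + 1)) (\<theta> + 1) U V"
proof -
  have "(\<Prod>j = 1..n-1. pochhammer (\<tau> j - of_nat ((U(n := U n + 1)) j)) (V j)) =
      (\<Prod>j = 1..n-1. pochhammer ((\<tau>(n := \<tau> n + 1)) j - of_nat (U j)) (V j))"
    by (rule prod.cong) auto
  then show ?thesis
    by (simp add: XA_weight_def pochhammer_rec)
qed

lemma XA_weight_column:
  assumes "1 \<le> r" and "r < n"
  shows "XA_weight n \<tau> \<theta> U (V(r := V r + 1)) =
    (\<tau> r - of_nat (U r)) * XA_weight n (\<tau>(r := \<tau> r + 1)) \<theta> U V"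
proof -
  have r: "r \<in> {1..n-1}" and "r \<noteq> n" using assms by auto
  let ?a = "\<tau> r - of_nat (U r)"
  let ?Q = "\<Prod>j \<in> {1..n-1} - {r}. pochhammer (\<tau> j - of_nat (U j)) (V j)"
  have "(\<Prod>j = 1..n-1. pochhammer (\<tau> j - of_nat (U j)) ((V(r := V r + 1)) j)) =
      pochhammer ?a (V r + 1) * ?Q"
    unfolding prod.remove[OF finite_atLeastAtMost r]
    by (intro arg_cong2[where f = "(*)"] prod.cong) auto
  moreover have "(\<Prod>j = 1..n-1. pochhammer ((\<tau>(r := \<tau> r + 1)) j - of_nat (U j)) (V j)) =
      pochhammer (?a + 1) (V r) * ?Q"
    unfolding prod.remove[OF finite_atLeastAtMost r]
    by (intro arg_cong2[where f = "(*)"] prod.cong) (auto simp: algebra_simps)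
  ultimately show ?thesis
    using \<open>r \<noteq> n\<close> by (simp add: XA_weight_def pochhammer_rec)
qed

lemma fps_deriv_A_XA:
  assumes "\<beta> \<in> GammaA n" and p: "(a, b) \<in> idxA n"
  shows "fps_deriv_A (a, b) (XA n \<tau> \<theta>) \<beta> =
    XA_weight n \<tau> \<theta> ((beta_under \<beta>)(a := beta_under \<beta> a + 1))
      ((beta_over n \<beta>)(b := beta_over n \<beta> b + 1)) / of_nat (beta_fact n \<beta>)"
proof -
  have "\<beta>((a, b) := \<beta> (a, b) + 1) \<in> GammaA n"
    using GammaA_update_iff[OF p] assms(1) by simp
  moreover have "of_nat (\<beta> (a, b) + 1) \<noteq> (0 :: complex)"
    by (metis add_eq_0_iff_both_eq_0 of_nat_eq_0_iff zero_neq_one)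
  ultimately show ?thesis
    unfolding fps_deriv_A_def
    by (simp only: XA_eq_weight beta_under_increment[OF p] beta_over_increment[OF p]
        beta_fact_increment[OF p] of_nat_mult) simp
qed

definition XA_raise :: "nat \<Rightarrow> (nat \<Rightarrow> complex) \<Rightarrow> complex \<Rightarrow> nat \<Rightarrow> nat \<Rightarrow> fps_A" where
  "XA_raise n \<tau> \<theta> s t =
     (if t < n then XA_shift n \<tau> \<theta> s t else fps_scale_A (\<tau> n / \<theta>) (XA_shift_n n \<tau> \<theta> s))"

lemma XA_raise_eq_weight:
  assumes "\<beta> \<in> GammaA n" and "1 \<le> s" and "s < t" and "t \<le> n"
  shows "XA_raise n \<tau> \<theta> s t \<beta> =
    XA_weight n (\<tau>(s := \<tau> s + 1)) \<theta> ((beta_under \<beta>)(t := beta_under \<beta> t + 1)) (beta_over n \<beta>)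
      / of_nat (beta_fact n \<beta>)"
proof (cases "t < n")
  case True
  then have "XA_weight n (\<tau>(s := \<tau> s + 1, t := \<tau> t - 1)) \<theta> (beta_under \<beta>) (beta_over n \<beta>) =
      XA_weight n (\<tau>(s := \<tau> s + 1)) \<theta> ((beta_under \<beta>)(t := beta_under \<beta> t + 1)) (beta_over n \<beta>)"
    using assms by (intro XA_weight_cong) auto
  then show ?thesis
    using True assms by (simp add: XA_raise_def XA_shift_def XA_eq_weight)
next
  case False
  with assms have "t = n" "s \<noteq> n" by auto
  then show ?thesis
    using assms XA_weight_top_row[of n "\<tau>(s := \<tau> s + 1)" \<theta> "beta_under \<beta>" "beta_over n \<beta>"]
    by (simp add: XA_raise_def XA_shift_n_def fps_scale_A_def XA_eq_weight)
qed

lemma XA_deriv_eq_raise: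
  assumes "\<beta> \<in> GammaA n" and "1 \<le> r" and "r < t" and "t \<le> n"
  shows "fps_deriv_A (t, r) (XA n \<tau> \<theta>) \<beta> = (\<tau> r - of_nat (beta_under \<beta> r)) * XA_raise n \<tau> \<theta> r t \<beta>"
  using assms XA_weight_column[of r n \<tau> \<theta> "(beta_under \<beta>)(t := beta_under \<beta> t + 1)" "beta_over n \<beta>"]
  by (simp add: fps_deriv_A_XA XA_raise_eq_weight idxA_def)

(* Moving one unit of exponent from z_{s,r} to z_{t,r} keeps all column sums; the changes of
   the row sums U_s and U_t are absorbed by the shifts of tau_s and of tau_t (of tau_n and theta
   if t = n). *)
lemma XA_deriv_transfer:
  assumes "\<gamma> \<in> GammaA n" and "1 \<le> r" and "r < s" and "s < t" and "t \<le> n"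
  shows "fps_deriv_A (t, r) (XA n \<tau> \<theta>) \<gamma> =
    of_nat (\<gamma> (s, r) + 1) * XA_raise n \<tau> \<theta> s t (\<gamma>((s, r) := \<gamma> (s, r) + 1))"
proof -
  define U V where "U = beta_under \<gamma>" and "V = beta_over n \<gamma>"
  define W where "W = XA_weight n \<tau> \<theta> (U(t := U t + 1)) (V(r := V r + 1))"
  define F c where "F = (of_nat (beta_fact n \<gamma>) :: complex)"
    and "c = (of_nat (\<gamma> (s, r) + 1) :: complex)"
  let ?U' = "U(s := U s + 1)"
  have sr: "(s, r) \<in> idxA n" and tr: "(t, r) \<in> idxA n" using assms by (auto simp: idxA_def)
  have "\<gamma>((s, r) := \<gamma> (s, r) + 1) \<in> GammaA n"
    using GammaA_update_iff[OF sr] assms(1) by simp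
  then have "XA_raise n \<tau> \<theta> s t (\<gamma>((s, r) := \<gamma> (s, r) + 1)) =
      XA_weight n (\<tau>(s := \<tau> s + 1)) \<theta> (?U'(t := ?U' t + 1)) (V(r := V r + 1))
        / (F * c)"
    using assms unfolding U_def V_def F_def c_def
    by (simp only: XA_raise_eq_weight beta_under_increment[OF sr] beta_over_increment[OF sr]
        beta_fact_increment[OF sr] of_nat_mult)
  also have "XA_weight n (\<tau>(s := \<tau> s + 1)) \<theta> (?U'(t := ?U' t + 1)) (V(r := V r + 1)) = W"
    unfolding W_def using assms by (intro XA_weight_cong) auto
  finally have raise: "XA_raise n \<tau> \<theta> s t (\<gamma>((s, r) := \<gamma> (s, r) + 1)) = W / (F * c)" .
  have deriv: "fps_deriv_A (t, r) (XA n \<tau> \<theta>) \<gamma> = W / F"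
    unfolding W_def F_def U_def V_def by (rule fps_deriv_A_XA[OF assms(1) tr])
  have "c \<noteq> 0" unfolding c_def by (metis of_nat_eq_0_iff add_eq_0_iff_both_eq_0 zero_neq_one)
  then show ?thesis unfolding raise deriv c_def[symmetric] by simp
qed

lemma XA_contiguity:
  assumes "\<beta> \<in> GammaA n" and "1 \<le> s" and "s < t" and "t \<le> n"
  shows "\<tau> s * XA_raise n \<tau> \<theta> s t \<beta> =
    fps_deriv_A (t, s) (XA n \<tau> \<theta>) \<beta> +
      (\<Sum>r = 1..<s. fps_mult_var_A (s, r) (fps_deriv_A (t, r) (XA n \<tau> \<theta>)) \<beta>)"
proof -
  let ?Y = "XA_raise n \<tau> \<theta> s t \<beta>"
  have "fps_mult_var_A (s, r) (fps_deriv_A (t, r) (XA n \<tau> \<theta>)) \<beta> = of_nat (\<beta> (s, r)) * ?Y"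
    if "r \<in> {1..<s}" for r
  proof (cases "\<beta> (s, r) = 0")
    case False
    define \<gamma> where "\<gamma> = \<beta>((s, r) := \<beta> (s, r) - 1)"
    have "\<gamma> \<in> GammaA n" "\<gamma>((s, r) := \<gamma> (s, r) + 1) = \<beta>" "\<gamma> (s, r) + 1 = \<beta> (s, r)"
      using False GammaA_decrement[OF assms(1)] by (auto simp: \<gamma>_def)
    then show ?thesis
      using XA_deriv_transfer[of \<gamma> n r s t \<tau> \<theta>] that assms False
      unfolding fps_mult_var_A_def \<gamma>_def[symmetric] by simp
  qed (simp add: fps_mult_var_A_def)
  then have "(\<Sum>r = 1..<s. fps_mult_var_A (s, r) (fps_deriv_A (t, r) (XA n \<tau> \<theta>)) \<beta>) =
      of_nat (beta_under \<beta> s) * ?Y"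
    by (simp add: beta_under_def sum_distrib_right)
  then show ?thesis
    using XA_deriv_eq_raise[OF assms] by (simp add: algebra_simps)
qed

lemma XA_deriv_path_expansion:
  assumes "1 \<le> r" and "r < t" and "t \<le> n"
  shows "fps_deriv_A (t, r) (XA n \<tau> \<theta>) =
    fps_sum_A (\<lambda>s. fps_scale_A (\<tau> s) (fps_mult_A (path_poly s r) (XA_raise n \<tau> \<theta> s t))) {1..r}"
proof
  fix \<beta>
  show "fps_deriv_A (t, r) (XA n \<tau> \<theta>) \<beta> =
    fps_sum_A (\<lambda>s. fps_scale_A (\<tau> s) (fps_mult_A (path_poly s r) (XA_raise n \<tau> \<theta> s t))) {1..r} \<beta>"
  proof (cases "\<beta> \<in> GammaA n")
    case True
    have "fps_deriv_A (t, r) (XA n \<tau> \<theta>) \<beta> =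
        (\<Sum>s = 1..r. fps_mult_A (path_poly s r) (fps_scale_A (\<tau> s) (XA_raise n \<tau> \<theta> s t)) \<beta>)"
      by (rule path_poly_inversion[where t = t and n = n])
        (use assms True XA_contiguity in \<open>auto simp: fps_scale_A_def\<close>)
    then show ?thesis
      by (simp add: fps_sum_A_def fps_mult_A_scale_right fps_scale_A_def)
  next
    case False
    have "(t, r) \<in> idxA n" using assms by (auto simp: idxA_def)
    then have "fps_deriv_A (t, r) (XA n \<tau> \<theta>) \<beta> = 0"
      using False by (simp add: fps_deriv_A_def XA_def GammaA_update_iff)
    moreover have "fps_mult_A (path_poly s r) (XA_raise n \<tau> \<theta> s t) \<beta> = 0" if "s \<in> {1..r}" for s
      using that assms False
      by (intro fps_mult_A_path_poly_off_GammaA)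
        (auto simp: XA_raise_def XA_shift_def XA_shift_n_def fps_scale_A_def XA_def)
    ultimately show ?thesis
      by (simp add: fps_sum_A_def fps_scale_A_def)
  qed
qed

theorem theorem5p1:
  fixes n :: nat and \<tau> :: "nat \<Rightarrow> complex" and \<theta> :: complex
  assumes "n \<ge> 2"
    and "\<forall>m::nat. \<theta> \<noteq> - of_nat m"
  shows "(\<forall>r1 r2. 1 \<le> r1 \<and> r1 < r2 \<and> r2 \<le> n - 1 \<longrightarrow>
            fps_deriv_A (r2, r1) (XA n \<tau> \<theta>) =
            fps_sum_A (\<lambda>s. fps_scale_A (\<tau> s)
                (fps_mult_A (path_poly s r1) (XA_shift n \<tau> \<theta> s r2))) {1..r1})
       \<and> (\<forall>r. 1 \<le> r \<and> r \<le> n - 1 \<longrightarrow>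
            fps_deriv_A (n, r) (XA n \<tau> \<theta>) =
            fps_scale_A (\<tau> n / \<theta>)
              (fps_sum_A (\<lambda>s. fps_scale_A (\<tau> s)
                (fps_mult_A (path_poly s r) (XA_shift_n n \<tau> \<theta> s))) {1..r}))"
proof (intro conjI allI impI)
  fix r1 r2 assume "1 \<le> r1 \<and> r1 < r2 \<and> r2 \<le> n - 1"
  then have "1 \<le> r1" "r1 < r2" "r2 < n" by auto
  then show "fps_deriv_A (r2, r1) (XA n \<tau> \<theta>) =
      fps_sum_A (\<lambda>s. fps_scale_A (\<tau> s) (fps_mult_A (path_poly s r1) (XA_shift n \<tau> \<theta> s r2))) {1..r1}"
    using XA_deriv_path_expansion[of r1 r2 n \<tau> \<theta>] by (simp add: XA_raise_def)
next
  fix r assume "1 \<le> r \<and> r \<le> n - 1"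
  then have "fps_deriv_A (n, r) (XA n \<tau> \<theta>) =
      fps_sum_A (\<lambda>s. fps_scale_A (\<tau> s) (fps_mult_A (path_poly s r) (XA_raise n \<tau> \<theta> s n))) {1..r}"
    by (intro XA_deriv_path_expansion) auto
  then show "fps_deriv_A (n, r) (XA n \<tau> \<theta>) =
      fps_scale_A (\<tau> n / \<theta>)
        (fps_sum_A (\<lambda>s. fps_scale_A (\<tau> s)
          (fps_mult_A (path_poly s r) (XA_shift_n n \<tau> \<theta> s))) {1..r})"
    by (simp add: XA_raise_def fps_mult_A_scale_right fps_sum_A_def fps_scale_A_def sum_distrib_left
        mult.left_commute fun_eq_iff)
qed

end
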